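(* Let $\tau>0$ and suppose that $\mathcal{K}^{\mathrm{sim}}_\tau(\mathcal{L})$ is nonempty. Consider GPC-Simplex run on $\mathcal{L}$ with input $(A,B,\tau,H,\mathcal{I},T)$. For each $t\in[T]$, the loss function $\ell_t(p,M^{[1:H]})=c_t(x_t(p,M^{[1:H]}),u_t(p,M^{[1:H]}))$ is $O(L\tau^2)$-Lipschitz with respect to the norm $\|\cdot\|_{d,H}$ on $\mathcal{X}$.
   Context: Notation. $\Delta^d$ is the probability simplex; $\Delta^d_\alpha:=\alpha\Delta^d$. $\mathbb{S}^d$: $d\times d$ column-stochastic matrices; $\mathbb{S}^d_a:=\{aM:M\in\mathbb{S}^d\}$; $\mathbb{S}^d_{[a,b]}:=\bigcup_{a'\in[a,b]}\mathbb{S}^d_{a'}$. $\|M\|_{1\to1}:=\sup_{\|x\|_1=1}\|Mx\|_1$; $M_{\cdot,j}$ is the $j$-th column. Norm: $\|(p,M^{[1:H]})\|_{d,H}^2:=\|p\|_1^2+\sum_{h=1}^H\sum_{j=1}^d\|M^{[h]}_{\cdot,j}\|_1^2$. $O(\cdot)$ hides a universal constant. Setting. $\mathcal{L}=(A,B,\mathcal{I},x_1,(\gamma_t),(w_t),(c_t))$ is a simplex LDS on $\Delta^d$: $A,B\in\mathbb{S}^d$, $\mathcal{I}=\bigcup_{\alpha\in[\alpha_{\mathrm{lb}},\alpha_{\mathrm{ub}}]}\Delta^d_\alpha$ with $0\le\alpha_{\mathrm{lb}}\le\alpha_{\mathrm{ub}}\le1$, $x_1\in\Delta^d$, $\gamma_t\in[0,1]$,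 $w_t\in\Delta^d$, and given $x_t$, $u_t\in\mathcal{I}$: $x_{t+1}=(1-\gamma_t)[(1-\|u_t\|_1)Ax_t+Bu_t]+\gamma_tw_t$, with cost $c_t(x_t,u_t)$. Each $c_t:\Delta^d\times\mathcal{I}\to\mathbb{R}$ is convex with $|c_t(x,u)-c_t(x',u')|\le L(\|x-x'\|_1+\|u-u'\|_1)$. Mixing: for $X\in\mathbb{S}^d$ with unique stationary distribution $\pi$, $D_X(t):=\sup_{p\in\Delta^d}\|X^tp-\pi\|_1$, $t_{\mathrm{mix}}(X):=\min\{t:D_X(t)\le1/4\}$ ($\infty$ if no unique stationary distribution). $C(K):=(1-\|K\|_{1\to1})A+BK$. $\mathcal{K}^{\mathrm{sim}}_\tau(\mathcal{L})$ is the set of policies $x\mapsto Kx$ with $K\in\mathbb{S}^d_{[\alpha_{\mathrm{lb}},\alpha_{\mathrm{ub}}]}$ and $t_{\mathrm{mix}}(C(K))\le\tau$. Algorithm GPC-Simplex (relevant parts). $\tau_A:=t_{\mathrm{mix}}(A)$, $a_0:=\max\{\alpha_{\mathrm{lb}},\min\{\alpha_{\mathrm{ub}},\mathbf{1}\{\tau_A>4\tau\}/(96\tau)\}\}$, domain $\mathcal{X}:=\bigcup_{a\in[a_0,\alpha_{\mathrm{ub}}]}\Delta^d_a\times(\mathbb{S}^d_a)^H$. Conventions $w_0:=x_1$, $\gamma_0:=1$, $w_t:=0$ for $t<0$; weights $\lambda_{t,i}:=\gamma_{t-i}\prod_{j=1}^{i-1}(1-\gamma_{t-j})$ ($i\ge1$),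 $\lambda_{t,0}:=1-\sum_{i=1}^H\lambda_{t,i}$. The algorithm computes the perturbations $w_t$ from observations, and $\ell_t(p,M^{[1:H]}):=c_t(x_t(p,M^{[1:H]}),u_t(p,M^{[1:H]}))$, where $x_1(p,M^{[1:H]}):=x_1$ and for $s\ge1$: $u_s(p,M^{[1:H]}):=\lambda_{s,0}p+\sum_{j=1}^H\lambda_{s,j}M^{[j]}w_{s-j}$, $x_{s+1}(p,M^{[1:H]}):=(1-\gamma_s)[(1-\|u_s(p,M^{[1:H]})\|_1)Ax_s(p,M^{[1:H]})+Bu_s(p,M^{[1:H]})]+\gamma_sw_s$. *)

theory Defs
  imports Complex_Main "HOL-Library.Extended_Nat"
begin

text \<open>Vectors in R^d are functions nat => real (coordinates i < d); d x d matrices are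
  functions nat => nat => real (entries (i,j) with i,j < d). Objects living in the
  simplex / stochastic matrices are required to vanish outside the index range.\<close>

definition norm1 :: "nat \<Rightarrow> (nat \<Rightarrow> real) \<Rightarrow> real" where
  "norm1 d x = (\<Sum>i<d. \<bar>x i\<bar>)"

definition simplex :: "nat \<Rightarrow> (nat \<Rightarrow> real) set" where
  "simplex d = {p. (\<forall>i. 0 \<le> p i) \<and> (\<forall>i\<ge>d. p i = 0) \<and> (\<Sum>i<d. p i) = 1}"

definition simplex_sc :: "nat \<Rightarrow> real \<Rightarrow> (nat \<Rightarrow> real) set" where
  "simplex_sc d \<alpha> = {(\<lambda>i. \<alpha> * p i) | p. p \<in> simplex d}"

definition stoch :: "nat \<Rightarrow> (nat \<Rightarrow> nat \<Rightarrow> real) \<Rightarrow> bool" where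
  "stoch d M \<longleftrightarrow> (\<forall>i j. 0 \<le> M i j) \<and> (\<forall>i j. (d \<le> i \<or> d \<le> j) \<longrightarrow> M i j = 0)
     \<and> (\<forall>j<d. (\<Sum>i<d. M i j) = 1)"

definition stoch_sc :: "nat \<Rightarrow> real \<Rightarrow> (nat \<Rightarrow> nat \<Rightarrow> real) set" where
  "stoch_sc d a = {(\<lambda>i j. a * M i j) | M. stoch d M}"

definition mv :: "nat \<Rightarrow> (nat \<Rightarrow> nat \<Rightarrow> real) \<Rightarrow> (nat \<Rightarrow> real) \<Rightarrow> nat \<Rightarrow> real" where
  "mv d M x = (\<lambda>i. if i < d then (\<Sum>j<d. M i j * x j) else 0)"

definition mmul :: "nat \<Rightarrow> (nat \<Rightarrow> nat \<Rightarrow> real) \<Rightarrow> (nat \<Rightarrow> nat \<Rightarrow> real) \<Rightarrow> nat \<Rightarrow> nat \<Rightarrow> real" where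
  "mmul d M N = (\<lambda>i j. if i < d \<and> j < d then (\<Sum>k<d. M i k * N k j) else 0)"

primrec mpow :: "nat \<Rightarrow> (nat \<Rightarrow> nat \<Rightarrow> real) \<Rightarrow> nat \<Rightarrow> nat \<Rightarrow> nat \<Rightarrow> real" where
  "mpow d X 0 = (\<lambda>i j. if i = j \<and> i < d then 1 else 0)"
| "mpow d X (Suc n) = mmul d X (mpow d X n)"

definition opnorm11 :: "nat \<Rightarrow> (nat \<Rightarrow> nat \<Rightarrow> real) \<Rightarrow> real" where
  "opnorm11 d M = Sup {norm1 d (mv d M x) | x. norm1 d x = 1}"

definition stationary :: "nat \<Rightarrow> (nat \<Rightarrow> nat \<Rightarrow> real) \<Rightarrow> (nat \<Rightarrow> real) \<Rightarrow> bool" where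
  "stationary d X \<pi> \<longleftrightarrow> \<pi> \<in> simplex d \<and> mv d X \<pi> = \<pi>"

definition Dmix :: "nat \<Rightarrow> (nat \<Rightarrow> nat \<Rightarrow> real) \<Rightarrow> (nat \<Rightarrow> real) \<Rightarrow> nat \<Rightarrow> real" where
  "Dmix d X \<pi> t = (SUP p\<in>simplex d. norm1 d (\<lambda>i. mv d (mpow d X t) p i - \<pi> i))"

definition tmix :: "nat \<Rightarrow> (nat \<Rightarrow> nat \<Rightarrow> real) \<Rightarrow> enat" where
  "tmix d X = (if \<exists>!\<pi>. stationary d X \<pi> then
      (let \<pi> = (THE \<pi>. stationary d X \<pi>) in
        if \<exists>t. Dmix d X \<pi> t \<le> 1/4 then enat (LEAST t. Dmix d X \<pi> t \<le> 1/4) else \<infinity>)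
    else \<infinity>)"

definition Cmat :: "nat \<Rightarrow> (nat \<Rightarrow> nat \<Rightarrow> real) \<Rightarrow> (nat \<Rightarrow> nat \<Rightarrow> real) \<Rightarrow> (nat \<Rightarrow> nat \<Rightarrow> real)
    \<Rightarrow> nat \<Rightarrow> nat \<Rightarrow> real" where
  "Cmat d A B K = (\<lambda>i j. (1 - opnorm11 d K) * A i j + mmul d B K i j)"

definition Ksim :: "nat \<Rightarrow> (nat \<Rightarrow> nat \<Rightarrow> real) \<Rightarrow> (nat \<Rightarrow> nat \<Rightarrow> real) \<Rightarrow> real \<Rightarrow> real \<Rightarrow> nat
    \<Rightarrow> (nat \<Rightarrow> nat \<Rightarrow> real) set" where
  "Ksim d A B alb aub \<tau> = {K. (\<exists>a\<in>{alb..aub}. K \<in> stoch_sc d a) \<and> tmix d (Cmat d A B K) \<le> enat \<tau>}"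

definition Iset :: "nat \<Rightarrow> real \<Rightarrow> real \<Rightarrow> (nat \<Rightarrow> real) set" where
  "Iset d alb aub = (\<Union>\<alpha>\<in>{alb..aub}. simplex_sc d \<alpha>)"

definition a0 :: "nat \<Rightarrow> (nat \<Rightarrow> nat \<Rightarrow> real) \<Rightarrow> nat \<Rightarrow> real \<Rightarrow> real \<Rightarrow> real" where
  "a0 d A \<tau> alb aub = max alb (min aub
      ((if tmix d A > enat (4 * \<tau>) then 1 else 0) / (96 * real \<tau>)))"

definition domX :: "nat \<Rightarrow> nat \<Rightarrow> real \<Rightarrow> real
    \<Rightarrow> ((nat \<Rightarrow> real) \<times> (nat \<Rightarrow> nat \<Rightarrow> nat \<Rightarrow> real)) set" where
  "domX d H alo aub = {(p, M). \<exists>a\<in>{alo..aub}. p \<in> simplex_sc d a \<and> (\<forall>h\<in>{1..H}. M h \<in> stoch_sc d a)}"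

definition normdH :: "nat \<Rightarrow> nat \<Rightarrow> (nat \<Rightarrow> real) \<Rightarrow> (nat \<Rightarrow> nat \<Rightarrow> nat \<Rightarrow> real) \<Rightarrow> real" where
  "normdH d H p M = sqrt ((norm1 d p)\<^sup>2 + (\<Sum>h\<in>{1..H}. \<Sum>j<d. (\<Sum>i<d. \<bar>M h i j\<bar>)\<^sup>2))"

text \<open>Conventions w_0 = x_1, gamma_0 = 1, w_t = 0 for t < 0 (gamma_t for t<0 is irrelevant; set to 0).\<close>
definition wext :: "(nat \<Rightarrow> real) \<Rightarrow> (nat \<Rightarrow> nat \<Rightarrow> real) \<Rightarrow> int \<Rightarrow> nat \<Rightarrow> real" where
  "wext x1 w k = (if k < 0 then (\<lambda>_. 0) else if k = 0 then x1 else w (nat k))"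

definition gext :: "(nat \<Rightarrow> real) \<Rightarrow> int \<Rightarrow> real" where
  "gext \<gamma> k = (if k < 0 then 0 else if k = 0 then 1 else \<gamma> (nat k))"

definition lamw :: "(nat \<Rightarrow> real) \<Rightarrow> nat \<Rightarrow> nat \<Rightarrow> real" where
  "lamw \<gamma> t i = gext \<gamma> (int t - int i) * (\<Prod>j\<in>{1..<i}. (1 - gext \<gamma> (int t - int j)))"

definition lam0 :: "(nat \<Rightarrow> real) \<Rightarrow> nat \<Rightarrow> nat \<Rightarrow> real" where
  "lam0 \<gamma> H t = 1 - (\<Sum>i\<in>{1..H}. lamw \<gamma> t i)"

definition uc :: "nat \<Rightarrow> nat \<Rightarrow> (nat \<Rightarrow> real) \<Rightarrow> (nat \<Rightarrow> real) \<Rightarrow> (nat \<Rightarrow> nat \<Rightarrow> real)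
    \<Rightarrow> (nat \<Rightarrow> real) \<Rightarrow> (nat \<Rightarrow> nat \<Rightarrow> nat \<Rightarrow> real) \<Rightarrow> nat \<Rightarrow> nat \<Rightarrow> real" where
  "uc d H \<gamma> x1 w p M s = (\<lambda>k. lam0 \<gamma> H s * p k
      + (\<Sum>j\<in>{1..H}. lamw \<gamma> s j * mv d (M j) (wext x1 w (int s - int j)) k))"

text \<open>xtraj ... n = x_{n+1}(p, M^{[1:H]}).\<close>
primrec xtraj :: "nat \<Rightarrow> nat \<Rightarrow> (nat \<Rightarrow> nat \<Rightarrow> real) \<Rightarrow> (nat \<Rightarrow> nat \<Rightarrow> real) \<Rightarrow> (nat \<Rightarrow> real)
    \<Rightarrow> (nat \<Rightarrow> real) \<Rightarrow> (nat \<Rightarrow> nat \<Rightarrow> real) \<Rightarrow> (nat \<Rightarrow> real) \<Rightarrow> (nat \<Rightarrow> nat \<Rightarrow> nat \<Rightarrow> real)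
    \<Rightarrow> nat \<Rightarrow> nat \<Rightarrow> real" where
  "xtraj d H A B \<gamma> x1 w p M 0 = x1"
| "xtraj d H A B \<gamma> x1 w p M (Suc n) =
     (let s = Suc n; u = uc d H \<gamma> x1 w p M s; x = xtraj d H A B \<gamma> x1 w p M n in
       (\<lambda>k. (1 - \<gamma> s) * ((1 - norm1 d u) * mv d A x k + mv d B u k) + \<gamma> s * w s k))"

definition loss :: "nat \<Rightarrow> nat \<Rightarrow> (nat \<Rightarrow> nat \<Rightarrow> real) \<Rightarrow> (nat \<Rightarrow> nat \<Rightarrow> real) \<Rightarrow> (nat \<Rightarrow> real)
    \<Rightarrow> (nat \<Rightarrow> real) \<Rightarrow> (nat \<Rightarrow> nat \<Rightarrow> real) \<Rightarrow> (nat \<Rightarrow> (nat \<Rightarrow> real) \<Rightarrow> (nat \<Rightarrow> real) \<Rightarrow> real)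
    \<Rightarrow> nat \<Rightarrow> (nat \<Rightarrow> real) \<Rightarrow> (nat \<Rightarrow> nat \<Rightarrow> nat \<Rightarrow> real) \<Rightarrow> real" where
  "loss d H A B \<gamma> x1 w c t p M =
     c t (xtraj d H A B \<gamma> x1 w p M (t - 1)) (uc d H \<gamma> x1 w p M t)"

end

theory Submission
  imports Defs
begin

text \<open>
  The cost is \<open>L\<close>-Lipschitz in \<open>(x\<^sub>t, u\<^sub>t)\<close>, and \<open>u\<^sub>t\<close> is a convex combination of \<open>p\<close> and the
  \<open>M\<^sub>j w\<^sub>t\<^sub>-\<^sub>j\<close>, hence \<open>1\<close>-Lipschitz in the parameters. Everything hinges on the deviation
  \<open>\<delta>\<^sub>m\<close> of the two state trajectories, which obeys \<open>\<delta>\<^sub>m\<^sub>+\<^sub>1 = c\<^sub>m A \<delta>\<^sub>m + e\<^sub>m\<close> with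
  \<open>0 \<le> c\<^sub>m \<le> 1 - a\<close> (\<open>a\<close> the mass of the inputs) and \<open>\<parallel>e\<^sub>m\<parallel>\<^sub>1\<close> at most twice the parameter distance.
  If \<open>a \<ge> 1/(96\<tau>)\<close>, the factor \<open>1 - a\<close> damps the recursion and \<open>\<parallel>\<delta>\<^sub>m\<parallel>\<^sub>1 = O(\<tau>)\<close> times the distance.
  Otherwise the threshold \<open>a\<^sub>0\<close> forces \<open>A\<close> itself to halve zero-sum vectors within some \<open>n \<le> 4\<tau>\<close>
  steps: either \<open>A\<close> mixes that fast, or all admissible policies have mass below \<open>1/(96\<tau>)\<close> and for
  \<open>\<tau>\<close> steps \<open>A\<close> stays within \<open>1/48\<close> of a closed loop \<open>C(K)\<close> that mixes in \<open>\<tau>\<close> steps. Since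
  \<open>\<delta>\<^sub>m\<close> has zero sum, the potential \<open>\<Sum>\<^sub>k\<^sub><\<^sub>n \<parallel>A\<^sup>k \<delta>\<^sub>m\<parallel>\<^sub>1\<close> then contracts by \<open>1 - 1/(2n)\<close> per step,
  giving \<open>\<parallel>\<delta>\<^sub>m\<parallel>\<^sub>1 = O(n\<^sup>2) = O(\<tau>\<^sup>2)\<close> times the distance.
\<close>

section \<open>The 1-norm, simplices and stochastic matrices\<close>

lemma norm1_nonneg: "0 \<le> norm1 d v"
  unfolding norm1_def by (simp add: sum_nonneg)

lemma norm1_cong: "(\<And>i. i < d \<Longrightarrow> v i = w i) \<Longrightarrow> norm1 d v = norm1 d w"
  unfolding norm1_def by (rule sum.cong) auto

lemma norm1_zero [simp]: "norm1 d (\<lambda>i. 0) = 0"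
  by (simp add: norm1_def)

lemma norm1_scale: "norm1 d (\<lambda>i. a * v i) = \<bar>a\<bar> * norm1 d v"
  unfolding norm1_def by (simp add: abs_mult sum_distrib_left)

lemma norm1_lincomb_le: "norm1 d (\<lambda>i. a * v i + b * w i) \<le> \<bar>a\<bar> * norm1 d v + \<bar>b\<bar> * norm1 d w"
proof -
  have "norm1 d (\<lambda>i. a * v i + b * w i) \<le> (\<Sum>i<d. \<bar>a\<bar> * \<bar>v i\<bar> + \<bar>b\<bar> * \<bar>w i\<bar>)"
    unfolding norm1_def by (rule sum_mono) (metis abs_mult abs_triangle_ineq)
  also have "\<dots> = \<bar>a\<bar> * norm1 d v + \<bar>b\<bar> * norm1 d w"
    unfolding norm1_def by (simp add: sum.distrib sum_distrib_left)
  finally show ?thesis .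
qed

lemma norm1_add_le: "norm1 d (\<lambda>i. v i + w i) \<le> norm1 d v + norm1 d w"
  using norm1_lincomb_le[of d 1 v 1 w] by simp

lemma norm1_diff_le: "norm1 d (\<lambda>i. v i - w i) \<le> norm1 d v + norm1 d w"
  using norm1_lincomb_le[of d 1 v "-1" w] by simp

lemma norm1_sum_le: "norm1 d (\<lambda>i. \<Sum>j\<in>S. f j i) \<le> (\<Sum>j\<in>S. norm1 d (f j))"
proof -
  have "norm1 d (\<lambda>i. \<Sum>j\<in>S. f j i) \<le> (\<Sum>i<d. \<Sum>j\<in>S. \<bar>f j i\<bar>)"
    unfolding norm1_def by (rule sum_mono) (rule sum_abs)
  also have "\<dots> = (\<Sum>j\<in>S. norm1 d (f j))"
    unfolding norm1_def by (rule sum.swap)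
  finally show ?thesis .
qed

lemma abs_sum_le_norm1: "\<bar>\<Sum>i<d. v i\<bar> \<le> norm1 d v"
  unfolding norm1_def by (rule sum_abs)

lemma norm1_simplex: "p \<in> simplex d \<Longrightarrow> norm1 d p = 1"
  unfolding simplex_def norm1_def by simp

lemma unit_vec_simplex: "j < d \<Longrightarrow> (\<lambda>i. if i = j then 1 else 0) \<in> simplex d"
  unfolding simplex_def by auto

lemma simplex_scI: "q \<in> simplex d \<Longrightarrow> p = (\<lambda>i. a * q i) \<Longrightarrow> p \<in> simplex_sc d a"
  unfolding simplex_sc_def by blast

lemma simplex_sc_iff:
  assumes "0 \<le> a" "0 < d"
  shows "p \<in> simplex_sc d a \<longleftrightarrow> (\<forall>i. 0 \<le> p i) \<and> (\<forall>i\<ge>d. p i = 0) \<and> (\<Sum>i<d. p i) = a"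
proof
  assume "p \<in> simplex_sc d a"
  then obtain q where "q \<in> simplex d" "p = (\<lambda>i. a * q i)"
    unfolding simplex_sc_def by auto
  then show "(\<forall>i. 0 \<le> p i) \<and> (\<forall>i\<ge>d. p i = 0) \<and> (\<Sum>i<d. p i) = a"
    using assms(1) by (simp add: simplex_def sum_distrib_left[symmetric])
next
  assume p: "(\<forall>i. 0 \<le> p i) \<and> (\<forall>i\<ge>d. p i = 0) \<and> (\<Sum>i<d. p i) = a"
  show "p \<in> simplex_sc d a"
  proof (cases "a = 0")
    case True
    then have "\<forall>i<d. p i = 0"
      using p sum_nonneg_eq_0_iff[of "{..<d}" p] by auto
    then have "p = (\<lambda>i. a * (if i = 0 then 1 else 0))"
      using p True by (metis linorder_not_le mult_zero_left)
    with unit_vec_simplex[OF assms(2)] show ?thesis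
      by (rule simplex_scI)
  next
    case False
    then have "(\<lambda>i. p i / a) \<in> simplex d"
      using p assms(1) by (simp add: simplex_def sum_divide_distrib[symmetric])
    moreover have "p = (\<lambda>i. a * (p i / a))"
      using False by simp
    ultimately show ?thesis
      by (rule simplex_scI)
  qed
qed

lemma sum_simplex_sc: "p \<in> simplex_sc d a \<Longrightarrow> (\<Sum>i<d. p i) = a"
  unfolding simplex_sc_def simplex_def by (auto simp: sum_distrib_left[symmetric])

lemma norm1_simplex_sc: "p \<in> simplex_sc d a \<Longrightarrow> 0 \<le> a \<Longrightarrow> norm1 d p = a"
  unfolding simplex_sc_def simplex_def norm1_def by (auto simp: abs_mult sum_distrib_left[symmetric])

lemma stoch_sc_column:
  assumes "K \<in> stoch_sc d a" "0 \<le> a" "j < d"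
  shows "0 \<le> K i j" "(\<Sum>i<d. K i j) = a" "(\<Sum>i<d. \<bar>K i j\<bar>) = a"
proof -
  obtain S where S: "stoch d S" "K = (\<lambda>i j. a * S i j)"
    using assms(1) unfolding stoch_sc_def by auto
  show nonneg: "0 \<le> K i j" for i
    using S assms(2) unfolding stoch_def by simp
  show "(\<Sum>i<d. K i j) = a"
    using S assms(3) unfolding stoch_def by (simp add: sum_distrib_left[symmetric])
  then show "(\<Sum>i<d. \<bar>K i j\<bar>) = a"
    using nonneg by simp
qed

lemma stoch_in_stoch_sc_1: "stoch d A \<Longrightarrow> A \<in> stoch_sc d 1"
  unfolding stoch_sc_def by auto

lemma mv_outside: "d \<le> i \<Longrightarrow> mv d X v i = 0"
  unfolding mv_def by simp

lemma mv_cong: "(\<And>j. j < d \<Longrightarrow> v j = w j) \<Longrightarrow> mv d X v = mv d X w"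
  unfolding mv_def by (rule ext) (auto intro!: sum.cong)

lemma mv_lincomb: "mv d X (\<lambda>i. a * v i + b * w i) = (\<lambda>i. a * mv d X v i + b * mv d X w i)"
  unfolding mv_def by (rule ext) (simp add: algebra_simps sum.distrib sum_distrib_left)

lemma mv_diff: "mv d X (\<lambda>i. v i - w i) = (\<lambda>i. mv d X v i - mv d X w i)"
  using mv_lincomb[of d X 1 v "-1" w] by simp

lemma mv_matrix_diff: "mv d (\<lambda>i j. X i j - Y i j) v = (\<lambda>i. mv d X v i - mv d Y v i)"
  unfolding mv_def by (rule ext) (simp add: algebra_simps sum_subtractf)

lemma mv_unit_vec: "j < d \<Longrightarrow> mv d X (\<lambda>k. if k = j then 1 else 0) = (\<lambda>i. if i < d then X i j else 0)"
proof (rule ext)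
  fix i
  assume "j < d"
  have "(\<Sum>k<d. X i k * (if k = j then 1 else 0)) = (\<Sum>k<d. if k = j then X i k else 0)"
    by (rule sum.cong) auto
  then show "mv d X (\<lambda>k. if k = j then 1 else 0) i = (if i < d then X i j else 0)"
    using \<open>j < d\<close> by (simp add: mv_def)
qed

lemma mv_mmul: "mv d (mmul d X Y) v = mv d X (mv d Y v)"
proof (rule ext)
  fix i
  show "mv d (mmul d X Y) v i = mv d X (mv d Y v) i"
  proof (cases "i < d")
    case True
    have "mv d (mmul d X Y) v i = (\<Sum>j<d. \<Sum>k<d. X i k * Y k j * v j)"
      using True by (simp add: mv_def mmul_def sum_distrib_right)
    also have "\<dots> = (\<Sum>k<d. \<Sum>j<d. X i k * Y k j * v j)"
      by (rule sum.swap)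
    also have "\<dots> = mv d X (mv d Y v) i"
      using True by (simp add: mv_def sum_distrib_left mult.assoc)
    finally show ?thesis .
  qed (simp add: mv_def)
qed

lemma norm1_mv_le:
  assumes "\<And>j. j < d \<Longrightarrow> (\<Sum>i<d. \<bar>X i j\<bar>) \<le> N"
  shows "norm1 d (mv d X v) \<le> N * norm1 d v"
proof -
  have "norm1 d (mv d X v) \<le> (\<Sum>i<d. \<Sum>j<d. \<bar>X i j\<bar> * \<bar>v j\<bar>)"
    unfolding norm1_def mv_def
    by (rule sum_mono) (simp add: order_trans[OF sum_abs] abs_mult)
  also have "\<dots> = (\<Sum>j<d. (\<Sum>i<d. \<bar>X i j\<bar>) * \<bar>v j\<bar>)"
    by (subst sum.swap) (simp add: sum_distrib_right)
  also have "\<dots> \<le> (\<Sum>j<d. N * \<bar>v j\<bar>)"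
    by (rule sum_mono) (simp add: assms mult_right_mono)
  finally show ?thesis
    by (simp add: norm1_def sum_distrib_left)
qed

lemma norm1_mv_stoch_sc_le:
  "K \<in> stoch_sc d a \<Longrightarrow> 0 \<le> a \<Longrightarrow> norm1 d (mv d K v) \<le> a * norm1 d v"
  by (rule norm1_mv_le) (simp add: stoch_sc_column)

lemma norm1_mv_stoch_le: "stoch d A \<Longrightarrow> norm1 d (mv d A v) \<le> norm1 d v"
  using norm1_mv_stoch_sc_le[OF stoch_in_stoch_sc_1] by fastforce

lemma sum_mv_stoch_sc:
  assumes "K \<in> stoch_sc d a" "0 \<le> a"
  shows "(\<Sum>i<d. mv d K v i) = a * (\<Sum>j<d. v j)"
proof -
  have "(\<Sum>i<d. mv d K v i) = (\<Sum>i<d. \<Sum>j<d. K i j * v j)"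
    unfolding mv_def by simp
  also have "\<dots> = (\<Sum>j<d. (\<Sum>i<d. K i j) * v j)"
    by (subst sum.swap) (simp add: sum_distrib_right)
  also have "\<dots> = a * (\<Sum>j<d. v j)"
    by (simp add: stoch_sc_column[OF assms] sum_distrib_left)
  finally show ?thesis .
qed

lemma mv_stoch_sc_nonneg:
  "K \<in> stoch_sc d a \<Longrightarrow> 0 \<le> a \<Longrightarrow> (\<And>j. 0 \<le> v j) \<Longrightarrow> 0 \<le> mv d K v i"
  unfolding mv_def by (auto intro!: sum_nonneg simp: stoch_sc_column)

section \<open>Contraction of zero-sum vectors\<close>

lemma funpow_mv_lincomb:
  "(mv d X ^^ k) (\<lambda>i. a * v i + b * w i) = (\<lambda>i. a * (mv d X ^^ k) v i + b * (mv d X ^^ k) w i)"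
  by (induction k) (simp_all add: mv_lincomb)

lemma norm1_funpow_le:
  assumes "\<And>w. norm1 d (mv d X w) \<le> norm1 d w"
  shows "norm1 d ((mv d X ^^ k) v) \<le> norm1 d v"
  by (induction k) (auto intro: order_trans[OF assms])

lemma mv_mpow: "i < d \<Longrightarrow> mv d (mpow d X t) v i = (mv d X ^^ t) v i"
proof (induction t arbitrary: i)
  case 0
  have "(\<Sum>j<d. (if i = j then 1 else 0) * v j) = (\<Sum>j<d. if j = i then v j else 0)"
    by (rule sum.cong) auto
  with 0 show ?case
    by (simp add: mv_def)
next
  case (Suc t)
  have "mv d (mpow d X (Suc t)) v = mv d X (mv d (mpow d X t) v)"
    by (simp add: mv_mmul)
  also have "\<dots> = mv d X ((mv d X ^^ t) v)"
    by (rule mv_cong) (simp add: Suc.IH)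
  finally show ?case
    by simp
qed

text \<open>A zero-sum vector does not see the common column \<open>\<pi>\<close>, so only the distance of the
  columns of \<open>Y\<close> from \<open>\<pi>\<close> matters.\<close>
lemma norm1_mv_zero_sum_le:
  assumes "\<And>j. j < d \<Longrightarrow> norm1 d (\<lambda>i. Y i j - \<pi> i) \<le> r" and "(\<Sum>j<d. v j) = 0"
  shows "norm1 d (mv d Y v) \<le> r * norm1 d v"
proof -
  have row: "(\<Sum>j<d. (Y i j - \<pi> i) * v j) = (\<Sum>j<d. Y i j * v j)" for i
    using assms(2) by (simp add: left_diff_distrib sum_subtractf flip: sum_distrib_left)
  have "mv d Y v = mv d (\<lambda>i j. Y i j - \<pi> i) v"
    unfolding mv_def by (simp only: row)
  moreover have "norm1 d (mv d (\<lambda>i j. Y i j - \<pi> i) v) \<le> r * norm1 d v"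
    by (rule norm1_mv_le) (use assms(1) in \<open>simp add: norm1_def\<close>)
  ultimately show ?thesis
    by simp
qed

lemma norm1_mpow_le_Dmix:
  assumes X: "\<And>w. norm1 d (mv d X w) \<le> norm1 d w" and "\<pi> \<in> simplex d" "p \<in> simplex d"
  shows "norm1 d (\<lambda>i. mv d (mpow d X t) p i - \<pi> i) \<le> Dmix d X \<pi> t"
proof -
  have "norm1 d (\<lambda>i. mv d (mpow d X t) q i - \<pi> i) \<le> 2" if "q \<in> simplex d" for q
  proof -
    have "norm1 d (\<lambda>i. mv d (mpow d X t) q i - \<pi> i) = norm1 d (\<lambda>i. (mv d X ^^ t) q i - \<pi> i)"
      by (rule norm1_cong) (simp add: mv_mpow)
    also have "\<dots> \<le> norm1 d ((mv d X ^^ t) q) + norm1 d \<pi>"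
      by (rule norm1_diff_le)
    also have "\<dots> \<le> 2"
      using norm1_funpow_le[OF X, of t q] norm1_simplex \<open>\<pi> \<in> simplex d\<close> that by simp
    finally show ?thesis .
  qed
  then show ?thesis
    unfolding Dmix_def using \<open>p \<in> simplex d\<close> by (intro cSUP_upper bdd_aboveI2)
qed

lemma norm1_funpow_mixing_le:
  assumes X: "\<And>w. norm1 d (mv d X w) \<le> norm1 d w"
    and tmix: "tmix d X \<le> enat m" and zero_sum: "(\<Sum>i<d. v i) = 0"
  shows "norm1 d ((mv d X ^^ m) v) \<le> norm1 d v / 4"
proof -
  have unique: "\<exists>!\<pi>. stationary d X \<pi>"
    using tmix unfolding tmix_def by (auto split: if_splits)
  define \<pi> where "\<pi> = (THE \<pi>. stationary d X \<pi>)"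
  have \<pi>: "\<pi> \<in> simplex d"
    using theI'[OF unique] unfolding \<pi>_def stationary_def by simp
  have ex: "\<exists>t. Dmix d X \<pi> t \<le> 1/4"
    using tmix unique unfolding tmix_def \<pi>_def[symmetric] by (auto simp: Let_def split: if_splits)
  define t0 where "t0 = (LEAST t. Dmix d X \<pi> t \<le> 1/4)"
  have "tmix d X = enat t0"
    using unique ex unfolding tmix_def \<pi>_def[symmetric] t0_def by (simp add: Let_def)
  with tmix have "t0 \<le> m"
    by simp
  have "norm1 d (\<lambda>i. mpow d X t0 i j - \<pi> i) \<le> 1/4" if "j < d" for j
  proof -
    have "norm1 d (\<lambda>i. mpow d X t0 i j - \<pi> i)
        = norm1 d (\<lambda>i. mv d (mpow d X t0) (\<lambda>k. if k = j then 1 else 0) i - \<pi> i)"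
      using that by (intro norm1_cong) (simp add: mv_unit_vec)
    also have "\<dots> \<le> Dmix d X \<pi> t0"
      by (rule norm1_mpow_le_Dmix[OF X \<pi> unit_vec_simplex[OF that]])
    also have "\<dots> \<le> 1/4"
      unfolding t0_def by (rule LeastI_ex[OF ex])
    finally show ?thesis .
  qed
  then have "norm1 d (mv d (mpow d X t0) v) \<le> 1/4 * norm1 d v"
    using zero_sum by (rule norm1_mv_zero_sum_le)
  moreover have "norm1 d (mv d (mpow d X t0) v) = norm1 d ((mv d X ^^ t0) v)"
    by (rule norm1_cong) (simp add: mv_mpow)
  moreover have "(mv d X ^^ m) v = (mv d X ^^ (m - t0)) ((mv d X ^^ t0) v)"
    using \<open>t0 \<le> m\<close> by (metis funpow_add le_add_diff_inverse2 o_apply)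
  then have "norm1 d ((mv d X ^^ m) v) \<le> norm1 d ((mv d X ^^ t0) v)"
    using norm1_funpow_le[OF X] by simp
  ultimately show ?thesis
    by simp
qed

lemma norm1_funpow_diff_le:
  assumes X: "\<And>w. norm1 d (mv d X w) \<le> norm1 d w" and Y: "\<And>w. norm1 d (mv d Y w) \<le> norm1 d w"
    and XY: "\<And>w. norm1 d (\<lambda>i. mv d X w i - mv d Y w i) \<le> \<epsilon> * norm1 d w" and "0 \<le> \<epsilon>"
  shows "norm1 d (\<lambda>i. (mv d X ^^ k) w i - (mv d Y ^^ k) w i) \<le> real k * \<epsilon> * norm1 d w"
proof (induction k)
  case (Suc k)
  let ?x = "(mv d X ^^ k) w" and ?y = "(mv d Y ^^ k) w"
  have "(\<lambda>i. (mv d X ^^ Suc k) w i - (mv d Y ^^ Suc k) w i)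
      = (\<lambda>i. mv d X (\<lambda>j. ?x j - ?y j) i + (mv d X ?y i - mv d Y ?y i))"
    by (simp add: mv_diff)
  then have "norm1 d (\<lambda>i. (mv d X ^^ Suc k) w i - (mv d Y ^^ Suc k) w i)
      \<le> norm1 d (mv d X (\<lambda>j. ?x j - ?y j)) + norm1 d (\<lambda>i. mv d X ?y i - mv d Y ?y i)"
    by (simp add: norm1_add_le)
  also have "\<dots> \<le> real k * \<epsilon> * norm1 d w + \<epsilon> * norm1 d w"
    using order_trans[OF X Suc.IH] order_trans[OF XY mult_left_mono[OF norm1_funpow_le[OF Y]]]
      \<open>0 \<le> \<epsilon>\<close> by (intro add_mono) auto
  finally show ?case
    by (simp add: algebra_simps)
qed simp

definition zero_sum_halving :: "nat \<Rightarrow> (nat \<Rightarrow> nat \<Rightarrow> real) \<Rightarrow> nat \<Rightarrow> bool" where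
  "zero_sum_halving d X n \<longleftrightarrow>
     (\<forall>v. (\<Sum>i<d. v i) = 0 \<longrightarrow> norm1 d ((mv d X ^^ n) v) \<le> norm1 d v / 2)"

lemma opnorm11_stoch_sc:
  assumes "0 < d" "K \<in> stoch_sc d a" "0 \<le> a"
  shows "opnorm11 d K = a"
  unfolding opnorm11_def
proof (rule cSup_eq_maximum)
  let ?e = "\<lambda>i::nat. if i = 0 then 1 else 0 :: real"
  have "norm1 d ?e = 1" and "norm1 d (mv d K ?e) = (\<Sum>i<d. \<bar>K i 0\<bar>)"
    using assms(1) norm1_simplex[OF unit_vec_simplex] by (auto simp: mv_unit_vec norm1_def)
  then show "a \<in> {norm1 d (mv d K x) |x. norm1 d x = 1}"
    using stoch_sc_column(3)[OF assms(2,3,1)] by force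
qed (auto intro: order_trans[OF norm1_mv_stoch_sc_le[OF assms(2,3)]])

lemma mv_Cmat:
  assumes "0 < d" "K \<in> stoch_sc d a" "0 \<le> a"
  shows "mv d (Cmat d A B K) w = (\<lambda>i. (1 - a) * mv d A w i + mv d B (mv d K w) i)"
proof -
  have "mv d (Cmat d A B K) w = (\<lambda>i. (1 - a) * mv d A w i + mv d (mmul d B K) w i)"
    unfolding Cmat_def opnorm11_stoch_sc[OF assms] mv_def
    by (intro ext) (simp add: distrib_right sum.distrib sum_distrib_left mult.assoc)
  then show ?thesis
    by (simp add: mv_mmul)
qed

lemma norm1_mv_Cmat_le:
  assumes "0 < d" "stoch d A" "stoch d B" "K \<in> stoch_sc d a" "0 \<le> a" "a \<le> 1"
  shows "norm1 d (mv d (Cmat d A B K) w) \<le> norm1 d w"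
proof -
  have "norm1 d (mv d (Cmat d A B K) w)
      \<le> \<bar>1 - a\<bar> * norm1 d (mv d A w) + \<bar>1\<bar> * norm1 d (mv d B (mv d K w))"
    unfolding mv_Cmat[OF assms(1,4,5)] using norm1_lincomb_le[of d "1 - a" _ 1] by simp
  also have "\<dots> \<le> (1 - a) * norm1 d w + a * norm1 d w"
    using norm1_mv_stoch_le[OF assms(2), of w] assms(6)
      order_trans[OF norm1_mv_stoch_le[OF assms(3)] norm1_mv_stoch_sc_le[OF assms(4,5)]]
    by (intro add_mono) (auto intro: mult_left_mono)
  finally show ?thesis
    by (simp add: algebra_simps)
qed

lemma norm1_mv_diff_Cmat_le:
  assumes "0 < d" "stoch d A" "stoch d B" "K \<in> stoch_sc d a" "0 \<le> a"
  shows "norm1 d (\<lambda>i. mv d A w i - mv d (Cmat d A B K) w i) \<le> 2 * a * norm1 d w"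
proof -
  have "norm1 d (\<lambda>i. mv d A w i - mv d (Cmat d A B K) w i)
      \<le> \<bar>a\<bar> * norm1 d (mv d A w) + \<bar>-1\<bar> * norm1 d (mv d B (mv d K w))"
    unfolding mv_Cmat[OF assms(1,4,5)] using norm1_lincomb_le[of d a _ "-1"] by (simp add: algebra_simps)
  also have "\<dots> \<le> a * norm1 d w + a * norm1 d w"
    using norm1_mv_stoch_le[OF assms(2), of w] assms(5)
      order_trans[OF norm1_mv_stoch_le[OF assms(3)] norm1_mv_stoch_sc_le[OF assms(4,5)]]
    by (intro add_mono) (auto intro: mult_left_mono)
  finally show ?thesis
    by simp
qed

text \<open>The open loop \<open>A = C(K) + O(\<parallel>K\<parallel>)\<close> stays within \<open>2\<tau>\<parallel>K\<parallel>\<close> of \<open>C(K)\<close> for \<open>\<tau>\<close> steps and so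
  inherits its contraction.\<close>
lemma zero_sum_halving_of_mixing_policy:
  assumes "0 < d" "stoch d A" "stoch d B" "K \<in> stoch_sc d a" "0 \<le> a" "a \<le> 1"
    and tmix: "tmix d (Cmat d A B K) \<le> enat \<tau>" and small: "a * real \<tau> \<le> 1/96"
  shows "zero_sum_halving d A \<tau>"
  unfolding zero_sum_halving_def
proof (intro allI impI)
  fix v :: "nat \<Rightarrow> real"
  assume zero_sum: "(\<Sum>i<d. v i) = 0"
  let ?C = "Cmat d A B K"
  have "norm1 d ((mv d A ^^ \<tau>) v)
      \<le> norm1 d ((mv d ?C ^^ \<tau>) v) + norm1 d (\<lambda>i. (mv d A ^^ \<tau>) v i - (mv d ?C ^^ \<tau>) v i)"
    using norm1_add_le[of d "(mv d ?C ^^ \<tau>) v" "\<lambda>i. (mv d A ^^ \<tau>) v i - (mv d ?C ^^ \<tau>) v i"]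
    by simp
  also have "\<dots> \<le> norm1 d v / 4 + real \<tau> * (2 * a) * norm1 d v"
    using norm1_funpow_mixing_le[OF norm1_mv_Cmat_le[OF assms(1-6)] tmix zero_sum]
      norm1_funpow_diff_le[OF norm1_mv_stoch_le[OF assms(2)] norm1_mv_Cmat_le[OF assms(1-6)]
        norm1_mv_diff_Cmat_le[OF assms(1-5)]] \<open>0 \<le> a\<close>
    by (intro add_mono) auto
  also have "\<dots> \<le> norm1 d v / 2"
  proof -
    have "real \<tau> * (2 * a) * norm1 d v \<le> 1/48 * norm1 d v"
      using small by (intro mult_right_mono norm1_nonneg) (simp add: algebra_simps)
    then show ?thesis
      using norm1_nonneg[of d v] by simp
  qed
  finally show "norm1 d ((mv d A ^^ \<tau>) v) \<le> norm1 d v / 2" .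
qed

text \<open>A mass below \<open>1/(96\<tau>)\<close> passes the threshold \<open>a\<^sub>0\<close> only if \<open>A\<close> mixes within \<open>4\<tau>\<close> steps
  or \<open>\<alpha>\<^sub>u\<^sub>b < 1/(96\<tau>)\<close>; in the latter case the lemma above applies to any policy in \<open>\<K>\<^sup>s\<^sup>i\<^sup>m\<close>.\<close>
lemma zero_sum_halving_of_small_mass:
  assumes "0 < d" "0 < \<tau>" "stoch d A" "stoch d B" "0 \<le> alb"
    and "Ksim d A B alb aub \<tau> \<noteq> {}" and "a0 d A \<tau> alb aub \<le> a" "a \<le> aub" "aub \<le> 1"
    and small: "a < 1 / (96 * real \<tau>)"
  shows "\<exists>n. 1 \<le> n \<and> n \<le> 4 * \<tau> \<and> zero_sum_halving d A n"
proof (cases "tmix d A > enat (4 * \<tau>)")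
  case True
  then have "aub < 1 / (96 * real \<tau>)"
    using assms(7,8) small unfolding a0_def by (auto simp: min_def split: if_splits)
  obtain K aK where K: "aK \<in> {alb..aub}" "K \<in> stoch_sc d aK" "tmix d (Cmat d A B K) \<le> enat \<tau>"
    using assms(6) unfolding Ksim_def by auto
  have "aK * real \<tau> \<le> aub * real \<tau>"
    using K(1) by (simp add: mult_right_mono)
  also have "\<dots> \<le> 1/96"
    using \<open>aub < 1 / (96 * real \<tau>)\<close> \<open>0 < \<tau>\<close> by (simp add: field_simps)
  finally have "zero_sum_halving d A \<tau>"
    using assms(1-5,9) K by (intro zero_sum_halving_of_mixing_policy) auto
  with \<open>0 < \<tau>\<close> show ?thesis
    by (intro exI[of _ \<tau>]) auto
next
  case False
  then have "tmix d A \<le> enat (4 * \<tau>)"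
    by (simp add: not_less)
  have "zero_sum_halving d A (4 * \<tau>)"
    unfolding zero_sum_halving_def
  proof (intro allI impI)
    fix v :: "nat \<Rightarrow> real"
    assume "(\<Sum>i<d. v i) = 0"
    with \<open>tmix d A \<le> enat (4 * \<tau>)\<close> have "norm1 d ((mv d A ^^ (4 * \<tau>)) v) \<le> norm1 d v / 4"
      by (intro norm1_funpow_mixing_le norm1_mv_stoch_le[OF assms(3)])
    then show "norm1 d ((mv d A ^^ (4 * \<tau>)) v) \<le> norm1 d v / 2"
      using norm1_nonneg[of d v] by simp
  qed
  with \<open>0 < \<tau>\<close> show ?thesis
    by (intro exI[of _ "4 * \<tau>"]) auto
qed

section \<open>Perturbed linear recursions\<close>

lemma affine_recursion_le:
  fixes f :: "nat \<Rightarrow> real"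
  assumes "0 \<le> q" "f 0 \<le> b" "\<And>m. f (Suc m) \<le> q * f m + (1 - q) * b"
  shows "f m \<le> b"
proof (induction m)
  case (Suc m)
  have "f (Suc m) \<le> q * f m + (1 - q) * b"
    by (rule assms(3))
  also have "\<dots> \<le> q * b + (1 - q) * b"
    using Suc \<open>0 \<le> q\<close> by (simp add: mult_left_mono)
  finally show ?case
    by (simp add: algebra_simps)
qed (use assms(2) in simp)

lemma norm1_damped_recursion_le:
  fixes \<delta> e :: "nat \<Rightarrow> nat \<Rightarrow> real" and c :: "nat \<Rightarrow> real"
  assumes A: "stoch d A" and "\<delta> 0 = (\<lambda>i. 0)"
    and step: "\<And>m. \<delta> (Suc m) = (\<lambda>i. c m * mv d A (\<delta> m) i + e m i)"
    and c: "\<And>m. 0 \<le> c m" "\<And>m. c m \<le> 1 - a" and e: "\<And>m. norm1 d (e m) \<le> E" and "0 < a"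
  shows "norm1 d (\<delta> m) \<le> E / a"
proof (rule affine_recursion_le[where q = "1 - a"])
  show "0 \<le> 1 - a"
    using c[of 0] by linarith
  show "norm1 d (\<delta> 0) \<le> E / a"
    using \<open>\<delta> 0 = (\<lambda>i. 0)\<close> order_trans[OF norm1_nonneg e] \<open>0 < a\<close> by simp
next
  fix m
  have "norm1 d (\<delta> (Suc m)) \<le> c m * norm1 d (mv d A (\<delta> m)) + norm1 d (e m)"
    unfolding step using norm1_lincomb_le[of d "c m" _ 1] c(1) by simp
  also have "\<dots> \<le> (1 - a) * norm1 d (\<delta> m) + E"
    using c[of m] e[of m] norm1_mv_stoch_le[OF A, of "\<delta> m"]
    by (intro add_mono mult_mono) (auto simp: norm1_nonneg)
  also have "\<dots> = (1 - a) * norm1 d (\<delta> m) + (1 - (1 - a)) * (E / a)"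
    using \<open>0 < a\<close> by simp
  finally show "norm1 d (\<delta> (Suc m)) \<le> (1 - a) * norm1 d (\<delta> m) + (1 - (1 - a)) * (E / a)" .
qed

definition orbit_norm1_sum :: "nat \<Rightarrow> (nat \<Rightarrow> nat \<Rightarrow> real) \<Rightarrow> nat \<Rightarrow> (nat \<Rightarrow> real) \<Rightarrow> real" where
  "orbit_norm1_sum d X n y = (\<Sum>k<n. norm1 d ((mv d X ^^ k) y))"

lemma orbit_norm1_sum_nonneg: "0 \<le> orbit_norm1_sum d X n y"
  unfolding orbit_norm1_sum_def by (simp add: sum_nonneg norm1_nonneg)

lemma norm1_le_orbit_norm1_sum: "1 \<le> n \<Longrightarrow> norm1 d y \<le> orbit_norm1_sum d X n y"
  unfolding orbit_norm1_sum_def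
  using member_le_sum[of 0 "{..<n}" "\<lambda>k. norm1 d ((mv d X ^^ k) y)"] by (simp add: norm1_nonneg)

lemma orbit_norm1_sum_le:
  "stoch d X \<Longrightarrow> orbit_norm1_sum d X n y \<le> real n * norm1 d y"
  unfolding orbit_norm1_sum_def
  using sum_mono[of "{..<n}" _ "\<lambda>_. norm1 d y"] norm1_funpow_le[OF norm1_mv_stoch_le] by simp

lemma orbit_norm1_sum_lincomb_le:
  "orbit_norm1_sum d X n (\<lambda>i. a * y i + z i) \<le> \<bar>a\<bar> * orbit_norm1_sum d X n y + orbit_norm1_sum d X n z"
  unfolding orbit_norm1_sum_def using funpow_mv_lincomb[where a = a and v = y and b = 1 and w = z]
  by (simp add: sum_distrib_left flip: sum.distrib)
    (intro sum_mono, use norm1_lincomb_le[of d a _ 1] in simp)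

lemma orbit_norm1_sum_mv_le:
  assumes "zero_sum_halving d X n" "(\<Sum>i<d. y i) = 0"
  shows "orbit_norm1_sum d X n (mv d X y) \<le> orbit_norm1_sum d X n y - norm1 d y / 2"
proof -
  have "orbit_norm1_sum d X n (mv d X y) + norm1 d y = orbit_norm1_sum d X n y + norm1 d ((mv d X ^^ n) y)"
    unfolding orbit_norm1_sum_def using sum.lessThan_Suc_shift[of "\<lambda>k. norm1 d ((mv d X ^^ k) y)" n]
    by (simp add: funpow_Suc_right del: funpow.simps)
  with assms show ?thesis
    unfolding zero_sum_halving_def by fastforce
qed

text \<open>Lyapunov argument: the potential \<open>orbit_norm1_sum d A n\<close> lies between \<open>\<parallel>\<delta>\<parallel>\<^sub>1\<close> and
  \<open>n \<parallel>\<delta>\<parallel>\<^sub>1\<close> and loses \<open>\<parallel>\<delta>\<parallel>\<^sub>1/2\<close> per step, so it contracts by \<open>1 - 1/(2n)\<close>.\<close>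
lemma norm1_mixing_recursion_le:
  fixes \<delta> e :: "nat \<Rightarrow> nat \<Rightarrow> real" and c :: "nat \<Rightarrow> real"
  assumes A: "stoch d A" and halving: "zero_sum_halving d A n" and "1 \<le> n" and "\<delta> 0 = (\<lambda>i. 0)"
    and step: "\<And>m. \<delta> (Suc m) = (\<lambda>i. c m * mv d A (\<delta> m) i + e m i)"
    and c: "\<And>m. 0 \<le> c m" "\<And>m. c m \<le> 1" and e: "\<And>m. norm1 d (e m) \<le> E"
    and zero_sum: "\<And>m. (\<Sum>i<d. \<delta> m i) = 0"
  shows "norm1 d (\<delta> m) \<le> 2 * (real n)\<^sup>2 * E"
proof -
  let ?\<Phi> = "orbit_norm1_sum d A n"
  let ?q = "1 - 1 / (2 * real n)"
  have "?\<Phi> (\<delta> m) \<le> 2 * (real n)\<^sup>2 * E"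
  proof (rule affine_recursion_le[where q = ?q])
    show "0 \<le> ?q"
      using \<open>1 \<le> n\<close> by simp
    show "?\<Phi> (\<delta> 0) \<le> 2 * (real n)\<^sup>2 * E"
      using orbit_norm1_sum_le[OF A, of n "\<delta> 0"] \<open>\<delta> 0 = (\<lambda>i. 0)\<close> order_trans[OF norm1_nonneg e]
      by (simp add: order_trans[OF _ mult_nonneg_nonneg])
  next
    fix m
    have "?\<Phi> (\<delta> (Suc m)) \<le> c m * ?\<Phi> (mv d A (\<delta> m)) + ?\<Phi> (e m)"
      unfolding step using orbit_norm1_sum_lincomb_le[of d A n "c m"] c(1)[of m] by simp
    also have "\<dots> \<le> (?\<Phi> (\<delta> m) - norm1 d (\<delta> m) / 2) + real n * E"
    proof -
      have "c m * ?\<Phi> (mv d A (\<delta> m)) \<le> ?\<Phi> (mv d A (\<delta> m))"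
        using c[of m] orbit_norm1_sum_nonneg by (simp add: mult_left_le_one_le)
      moreover have "?\<Phi> (e m) \<le> real n * E"
        using orbit_norm1_sum_le[OF A, of n "e m"] mult_left_mono[OF e[of m], of "real n"] by simp
      ultimately show ?thesis
        using orbit_norm1_sum_mv_le[OF halving zero_sum[of m]] by linarith
    qed
    also have "\<dots> \<le> ?q * ?\<Phi> (\<delta> m) + (1 - ?q) * (2 * (real n)\<^sup>2 * E)"
      using orbit_norm1_sum_le[OF A, of n "\<delta> m"] \<open>1 \<le> n\<close> by (simp add: field_simps power2_eq_square)
    finally show "?\<Phi> (\<delta> (Suc m)) \<le> ?q * ?\<Phi> (\<delta> m) + (1 - ?q) * (2 * (real n)\<^sup>2 * E)" .
  qed
  with norm1_le_orbit_norm1_sum[OF \<open>1 \<le> n\<close>] show ?thesis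
    by (rule order_trans)
qed

section \<open>Inputs and trajectories of GPC-Simplex\<close>

lemma lds_step_in_simplex:
  assumes "stoch d A" "stoch d B" "x \<in> simplex d" "u \<in> simplex_sc d a" "0 \<le> a" "a \<le> 1"
    and "0 \<le> g" "g \<le> 1" "w \<in> simplex d"
  shows "(\<lambda>k. (1 - g) * ((1 - a) * mv d A x k + mv d B u k) + g * w k) \<in> simplex d"
proof -
  have A: "A \<in> stoch_sc d 1" and B: "B \<in> stoch_sc d 1"
    using assms(1,2) by (simp_all add: stoch_in_stoch_sc_1)
  obtain q where q: "q \<in> simplex d" "u = (\<lambda>i. a * q i)"
    using assms(4) unfolding simplex_sc_def by auto
  have u: "0 \<le> u i" "(\<Sum>i<d. u i) = a" for i
    using q assms(5) unfolding simplex_def by (auto simp: sum_distrib_left[symmetric])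
  have "(\<Sum>k<d. (1 - g) * ((1 - a) * mv d A x k + mv d B u k) + g * w k)
      = (1 - g) * ((1 - a) * (\<Sum>k<d. mv d A x k) + (\<Sum>k<d. mv d B u k)) + g * (\<Sum>k<d. w k)"
    by (simp add: sum.distrib flip: sum_distrib_left)
  also have "\<dots> = 1"
    using assms(3,9) u(2) by (simp add: sum_mv_stoch_sc[OF A] sum_mv_stoch_sc[OF B] simplex_def algebra_simps)
  finally have "(\<Sum>k<d. (1 - g) * ((1 - a) * mv d A x k + mv d B u k) + g * w k) = 1" .
  moreover have "0 \<le> (1 - g) * ((1 - a) * mv d A x k + mv d B u k) + g * w k" for k
    using assms(3,5-9) u(1)
    by (intro add_nonneg_nonneg mult_nonneg_nonneg mv_stoch_sc_nonneg[OF A] mv_stoch_sc_nonneg[OF B])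
      (auto simp: simplex_def)
  moreover have "(1 - g) * ((1 - a) * mv d A x k + mv d B u k) + g * w k = 0" if "d \<le> k" for k
    using assms(9) that by (simp add: mv_outside simplex_def)
  ultimately show ?thesis
    unfolding simplex_def mem_Collect_eq by blast
qed

lemma normdH_nonneg: "0 \<le> normdH d H p M"
  unfolding normdH_def by (intro real_sqrt_ge_zero add_nonneg_nonneg sum_nonneg) auto

lemma norm1_le_normdH: "norm1 d p \<le> normdH d H p M"
  unfolding normdH_def by (rule real_le_rsqrt) (intro add_increasing2 sum_nonneg, auto)

lemma column_le_normdH:
  assumes "h \<in> {1..H}" "j < d"
  shows "(\<Sum>i<d. \<bar>M h i j\<bar>) \<le> normdH d H p M"
  unfolding normdH_def
proof (rule real_le_rsqrt)
  have "(\<Sum>i<d. \<bar>M h i j\<bar>)\<^sup>2 \<le> (\<Sum>j<d. (\<Sum>i<d. \<bar>M h i j\<bar>)\<^sup>2)"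
    using assms(2) by (intro member_le_sum) auto
  also have "\<dots> \<le> (\<Sum>h\<in>{1..H}. \<Sum>j<d. (\<Sum>i<d. \<bar>M h i j\<bar>)\<^sup>2)"
    using assms(1) by (intro member_le_sum) (auto intro!: sum_nonneg)
  finally show "(\<Sum>i<d. \<bar>M h i j\<bar>)\<^sup>2 \<le> (norm1 d p)\<^sup>2 + (\<Sum>h\<in>{1..H}. \<Sum>j<d. (\<Sum>i<d. \<bar>M h i j\<bar>)\<^sup>2)"
    by (simp add: add_increasing)
qed

lemma gext_range: "(\<And>t. 1 \<le> t \<Longrightarrow> \<gamma> t \<in> {0..1}) \<Longrightarrow> 0 \<le> gext \<gamma> k \<and> gext \<gamma> k \<le> 1"
  unfolding gext_def by auto

lemma lamw_nonneg: "(\<And>t. 1 \<le> t \<Longrightarrow> \<gamma> t \<in> {0..1}) \<Longrightarrow> 0 \<le> lamw \<gamma> t i"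
  unfolding lamw_def by (intro mult_nonneg_nonneg prod_nonneg) (simp_all add: gext_range)

lemma lamw_eq_0: "t < i \<Longrightarrow> lamw \<gamma> t i = 0"
  unfolding lamw_def gext_def by simp

lemma sum_lamw: "(\<Sum>i\<in>{1..m}. lamw \<gamma> t i) = 1 - (\<Prod>j\<in>{1..m}. 1 - gext \<gamma> (int t - int j))"
proof (induction m)
  case (Suc m)
  have "lamw \<gamma> t (Suc m) = gext \<gamma> (int t - int (Suc m)) * (\<Prod>j\<in>{1..m}. 1 - gext \<gamma> (int t - int j))"
    unfolding lamw_def by (simp add: atLeastLessThanSuc_atLeastAtMost)
  with Suc show ?case
    by (simp add: sum.cl_ivl_Suc prod.cl_ivl_Suc algebra_simps)
qed simp

lemma lam0_range: "(\<And>t. 1 \<le> t \<Longrightarrow> \<gamma> t \<in> {0..1}) \<Longrightarrow> lam0 \<gamma> H t \<in> {0..1}"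
  unfolding lam0_def sum_lamw by (auto intro!: prod_nonneg prod_le_1 simp: gext_range)

definition param_slice :: "nat \<Rightarrow> nat \<Rightarrow> real \<Rightarrow> ((nat \<Rightarrow> real) \<times> (nat \<Rightarrow> nat \<Rightarrow> nat \<Rightarrow> real)) set" where
  "param_slice d H a = {(p, M). p \<in> simplex_sc d a \<and> (\<forall>h\<in>{1..H}. M h \<in> stoch_sc d a)}"

lemma param_slice_of_domX:
  assumes "(p, M) \<in> domX d H (a0 d A \<tau> alb aub) aub"
  obtains a where "a \<in> {alb..aub}" "a0 d A \<tau> alb aub \<le> a" "(p, M) \<in> param_slice d H a"
proof -
  obtain a where "a \<in> {a0 d A \<tau> alb aub..aub}" "(p, M) \<in> param_slice d H a"
    using assms unfolding domX_def param_slice_def by auto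
  moreover have "alb \<le> a0 d A \<tau> alb aub"
    by (simp add: a0_def)
  ultimately show thesis
    by (intro that) auto
qed

lemma abs_mass_diff_le_normdH:
  assumes "(p, M) \<in> param_slice d H a" "(p', M') \<in> param_slice d H a'"
  shows "\<bar>a - a'\<bar> \<le> normdH d H (\<lambda>i. p i - p' i) M''"
proof -
  have "a - a' = (\<Sum>i<d. p i - p' i)"
    using assms sum_simplex_sc[of p d a] sum_simplex_sc[of p' d a']
    by (simp add: param_slice_def sum_subtractf)
  then have "\<bar>a - a'\<bar> \<le> norm1 d (\<lambda>i. p i - p' i)"
    by (simp add: abs_sum_le_norm1)
  also have "\<dots> \<le> normdH d H (\<lambda>i. p i - p' i) M''"
    by (rule norm1_le_normdH)
  finally show ?thesis .
qed

locale simplex_lds =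
  fixes d H :: nat and A B :: "nat \<Rightarrow> nat \<Rightarrow> real" and \<gamma> x1 :: "nat \<Rightarrow> real"
    and w :: "nat \<Rightarrow> nat \<Rightarrow> real"
  assumes stoch_A: "stoch d A" and stoch_B: "stoch d B"
    and gamma_range: "\<And>t. 1 \<le> t \<Longrightarrow> \<gamma> t \<in> {0..1}"
    and x1_simplex: "x1 \<in> simplex d" and w_simplex: "\<And>t. 1 \<le> t \<Longrightarrow> w t \<in> simplex d"
begin

abbreviation ctrl where "ctrl \<equiv> uc d H \<gamma> x1 w"

abbreviation traj where "traj \<equiv> xtraj d H A B \<gamma> x1 w"

abbreviation param_dist where
  "param_dist p M p' M' \<equiv> normdH d H (\<lambda>i. p i - p' i) (\<lambda>h i j. M h i j - M' h i j)"

lemma dim_pos: "0 < d"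
  using x1_simplex by (rule contrapos_pp) (simp add: simplex_def)

lemma wext_simplex: "0 \<le> k \<Longrightarrow> wext x1 w k \<in> simplex d"
  unfolding wext_def using x1_simplex w_simplex by auto

lemma wext_nonneg: "0 \<le> wext x1 w k i"
  using wext_simplex[of k] by (cases "k < 0") (auto simp: wext_def simplex_def)

lemma norm1_wext_le: "norm1 d (wext x1 w k) \<le> 1"
  using wext_simplex[of k] norm1_simplex by (cases "k < 0") (auto simp: wext_def)

lemma sum_ctrl:
  assumes "(p, M) \<in> param_slice d H a" "0 \<le> a"
  shows "(\<Sum>k<d. ctrl p M s k) = a"
proof -
  have summand: "lamw \<gamma> s j * (\<Sum>k<d. mv d (M j) (wext x1 w (int s - int j)) k) = lamw \<gamma> s j * a"
    if "j \<in> {1..H}" for j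
  proof (cases "s < j")
    case False
    then have "(\<Sum>k<d. wext x1 w (int s - int j) k) = 1"
      using wext_simplex[of "int s - int j"] by (simp add: simplex_def)
    with that assms sum_mv_stoch_sc[of "M j" d a] show ?thesis
      by (simp add: param_slice_def)
  qed (simp add: lamw_eq_0) \<comment> \<open>\<open>w\<^sub>s\<^sub>-\<^sub>j = 0\<close> is no distribution, but its weight vanishes\<close>
  have "(\<Sum>k<d. ctrl p M s k) = lam0 \<gamma> H s * (\<Sum>k<d. p k)
      + (\<Sum>j\<in>{1..H}. lamw \<gamma> s j * (\<Sum>k<d. mv d (M j) (wext x1 w (int s - int j)) k))"
    unfolding uc_def by (simp add: sum.distrib sum_distrib_left sum.swap[of _ "{..<d}"])
  also have "\<dots> = lam0 \<gamma> H s * a + (\<Sum>j\<in>{1..H}. lamw \<gamma> s j * a)"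
    using assms(1) sum_simplex_sc[of p d a] by (simp add: param_slice_def summand)
  also have "\<dots> = a"
    unfolding lam0_def sum_distrib_right[symmetric] by (simp add: algebra_simps)
  finally show ?thesis .
qed

lemma ctrl_in_simplex_sc:
  assumes "(p, M) \<in> param_slice d H a" "0 \<le> a"
  shows "ctrl p M s \<in> simplex_sc d a"
proof -
  have "p \<in> simplex_sc d a" and M: "\<And>j. j \<in> {1..H} \<Longrightarrow> M j \<in> stoch_sc d a"
    using assms(1) by (auto simp: param_slice_def)
  then have p: "\<forall>i. 0 \<le> p i" "\<forall>i\<ge>d. p i = 0"
    using simplex_sc_iff[OF assms(2) dim_pos] by auto
  have "0 \<le> ctrl p M s k" for k
    unfolding uc_def using p lam0_range[OF gamma_range] lamw_nonneg[OF gamma_range]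
    by (intro add_nonneg_nonneg mult_nonneg_nonneg sum_nonneg mv_stoch_sc_nonneg[OF M assms(2)]
        wext_nonneg) auto
  moreover have "ctrl p M s k = 0" if "d \<le> k" for k
    using p that by (simp add: uc_def mv_outside)
  ultimately show ?thesis
    using sum_ctrl[OF assms] by (simp add: simplex_sc_iff[OF assms(2) dim_pos])
qed

lemma traj_in_simplex:
  assumes "(p, M) \<in> param_slice d H a" "0 \<le> a" "a \<le> 1"
  shows "traj p M n \<in> simplex d"
proof (induction n)
  case 0
  show ?case
    using x1_simplex by simp
next
  case (Suc n)
  have u: "ctrl p M (Suc n) \<in> simplex_sc d a"
    using assms(1,2) by (rule ctrl_in_simplex_sc)
  then have "norm1 d (ctrl p M (Suc n)) = a"
    using assms(2) by (rule norm1_simplex_sc)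
  with lds_step_in_simplex[OF stoch_A stoch_B Suc u assms(2,3)] gamma_range[of "Suc n"]
    w_simplex[of "Suc n"] show ?case
    by (simp add: Let_def)
qed

lemma norm1_ctrl_diff_le: "norm1 d (\<lambda>k. ctrl p M s k - ctrl p' M' s k) \<le> param_dist p M p' M'"
proof -
  let ?N = "param_dist p M p' M'"
  let ?D = "\<lambda>j. mv d (\<lambda>i k. M j i k - M' j i k) (wext x1 w (int s - int j))"
  have D: "norm1 d (?D j) \<le> ?N" if "j \<in> {1..H}" for j
  proof -
    have "norm1 d (?D j) \<le> ?N * norm1 d (wext x1 w (int s - int j))"
      by (rule norm1_mv_le) (rule column_le_normdH[OF that])
    also have "\<dots> \<le> ?N"
      using mult_left_mono[OF norm1_wext_le normdH_nonneg] by simp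
    finally show ?thesis .
  qed
  have "(\<lambda>k. ctrl p M s k - ctrl p' M' s k)
      = (\<lambda>k. lam0 \<gamma> H s * (p k - p' k) + 1 * (\<Sum>j\<in>{1..H}. lamw \<gamma> s j * ?D j k))"
    unfolding uc_def mv_matrix_diff by (simp add: algebra_simps sum_subtractf)
  then have "norm1 d (\<lambda>k. ctrl p M s k - ctrl p' M' s k)
      \<le> lam0 \<gamma> H s * norm1 d (\<lambda>k. p k - p' k) + norm1 d (\<lambda>k. \<Sum>j\<in>{1..H}. lamw \<gamma> s j * ?D j k)"
    using norm1_lincomb_le[of d "lam0 \<gamma> H s" _ 1] lam0_range[OF gamma_range] by simp
  also have "\<dots> \<le> lam0 \<gamma> H s * ?N + (\<Sum>j\<in>{1..H}. lamw \<gamma> s j * ?N)"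
  proof (rule add_mono)
    show "lam0 \<gamma> H s * norm1 d (\<lambda>k. p k - p' k) \<le> lam0 \<gamma> H s * ?N"
      using lam0_range[OF gamma_range] norm1_le_normdH by (simp add: mult_left_mono)
    have "norm1 d (\<lambda>k. \<Sum>j\<in>{1..H}. lamw \<gamma> s j * ?D j k)
        \<le> (\<Sum>j\<in>{1..H}. norm1 d (\<lambda>k. lamw \<gamma> s j * ?D j k))"
      by (rule norm1_sum_le)
    also have "\<dots> \<le> (\<Sum>j\<in>{1..H}. lamw \<gamma> s j * ?N)"
      by (rule sum_mono) (simp add: norm1_scale lamw_nonneg[OF gamma_range] D mult_left_mono)
    finally show "norm1 d (\<lambda>k. \<Sum>j\<in>{1..H}. lamw \<gamma> s j * ?D j k) \<le> (\<Sum>j\<in>{1..H}. lamw \<gamma> s j * ?N)" .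
  qed
  also have "\<dots> = ?N"
    unfolding lam0_def sum_distrib_right[symmetric] by (simp add: algebra_simps)
  finally show ?thesis .
qed

lemma traj_diff_Suc:
  assumes "(p, M) \<in> param_slice d H a" "0 \<le> a" "(p', M') \<in> param_slice d H a'" "0 \<le> a'"
  shows "(\<lambda>k. traj p M (Suc m) k - traj p' M' (Suc m) k)
    = (\<lambda>k. ((1 - \<gamma> (Suc m)) * (1 - a)) * mv d A (\<lambda>i. traj p M m i - traj p' M' m i) k
         + (1 - \<gamma> (Suc m)) * ((a' - a) * mv d A (traj p' M' m) k
             + mv d B (\<lambda>i. ctrl p M (Suc m) i - ctrl p' M' (Suc m) i) k))"
  using norm1_simplex_sc[OF ctrl_in_simplex_sc[OF assms(1,2)] assms(2)]
    norm1_simplex_sc[OF ctrl_in_simplex_sc[OF assms(3,4)] assms(4)]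
  by (simp add: Let_def mv_diff algebra_simps)

lemma norm1_traj_forcing_le:
  assumes "(p, M) \<in> param_slice d H a" "(p', M') \<in> param_slice d H a'" "0 \<le> a'" "a' \<le> 1"
  shows "norm1 d (\<lambda>k. (1 - \<gamma> (Suc m)) * ((a' - a) * mv d A (traj p' M' m) k
           + mv d B (\<lambda>i. ctrl p M (Suc m) i - ctrl p' M' (Suc m) i) k))
     \<le> 2 * param_dist p M p' M'"
proof -
  let ?N = "param_dist p M p' M'"
  let ?X = "mv d A (traj p' M' m)"
  let ?U = "mv d B (\<lambda>i. ctrl p M (Suc m) i - ctrl p' M' (Suc m) i)"
  have "norm1 d ?X \<le> 1"
    using norm1_mv_stoch_le[OF stoch_A] norm1_simplex[OF traj_in_simplex[OF assms(2-4)]] by metis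
  moreover have "norm1 d ?U \<le> ?N"
    using norm1_mv_stoch_le[OF stoch_B] norm1_ctrl_diff_le by (rule order_trans)
  moreover have "\<bar>a' - a\<bar> \<le> ?N"
    using abs_mass_diff_le_normdH[OF assms(1,2)] by (simp add: abs_minus_commute)
  ultimately have "\<bar>a' - a\<bar> * norm1 d ?X + norm1 d ?U \<le> 2 * ?N"
    using mult_mono[of "\<bar>a' - a\<bar>" ?N "norm1 d ?X" 1] norm1_nonneg[of d ?X] normdH_nonneg by simp
  then have "norm1 d (\<lambda>k. (a' - a) * ?X k + ?U k) \<le> 2 * ?N"
    using norm1_lincomb_le[of d "a' - a" ?X 1 ?U] by simp
  moreover have "\<bar>1 - \<gamma> (Suc m)\<bar> \<le> 1"
    using gamma_range[of "Suc m"] by simp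
  ultimately show ?thesis
    unfolding norm1_scale using mult_mono[of _ 1 _ "2 * ?N"] norm1_nonneg by fastforce
qed

lemma traj_diff_recursion:
  assumes pM: "(p, M) \<in> param_slice d H a" "0 \<le> a" "a \<le> 1"
    and pM': "(p', M') \<in> param_slice d H a'" "0 \<le> a'" "a' \<le> 1"
  obtains c e where
    "\<And>m. (\<lambda>i. traj p M (Suc m) i - traj p' M' (Suc m) i)
       = (\<lambda>i. c m * mv d A (\<lambda>j. traj p M m j - traj p' M' m j) i + e m i)"
    "\<And>m. 0 \<le> c m" "\<And>m. c m \<le> 1 - a" "\<And>m. norm1 d (e m) \<le> 2 * param_dist p M p' M'"
proof
  show "(\<lambda>i. traj p M (Suc m) i - traj p' M' (Suc m) i)
      = (\<lambda>i. (1 - \<gamma> (Suc m)) * (1 - a) * mv d A (\<lambda>j. traj p M m j - traj p' M' m j) i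
          + (1 - \<gamma> (Suc m)) * ((a' - a) * mv d A (traj p' M' m) i
            + mv d B (\<lambda>j. ctrl p M (Suc m) j - ctrl p' M' (Suc m) j) i))" for m
    by (rule traj_diff_Suc[OF pM(1,2) pM'(1,2)])
  show "0 \<le> (1 - \<gamma> (Suc m)) * (1 - a)" "(1 - \<gamma> (Suc m)) * (1 - a) \<le> 1 - a" for m
    using gamma_range[of "Suc m"] pM(2,3) by (auto intro: mult_nonneg_nonneg mult_left_le_one_le)
qed (rule norm1_traj_forcing_le[OF pM(1) pM'])

lemma norm1_traj_diff_le_of_mass:
  assumes pM: "(p, M) \<in> param_slice d H a" "0 \<le> a" "a \<le> 1"
    and pM': "(p', M') \<in> param_slice d H a'" "0 \<le> a'" "a' \<le> 1" and "0 < a"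
  shows "norm1 d (\<lambda>i. traj p M m i - traj p' M' m i) \<le> 2 * param_dist p M p' M' / a"
proof -
  obtain c e where "\<And>m. (\<lambda>i. traj p M (Suc m) i - traj p' M' (Suc m) i)
      = (\<lambda>i. c m * mv d A (\<lambda>j. traj p M m j - traj p' M' m j) i + e m i)"
    and "\<And>m. 0 \<le> c m" "\<And>m. c m \<le> 1 - a" "\<And>m. norm1 d (e m) \<le> 2 * param_dist p M p' M'"
    using traj_diff_recursion[OF pM pM'] by blast
  from norm1_damped_recursion_le[where \<delta> = "\<lambda>m i. traj p M m i - traj p' M' m i",
      OF stoch_A _ this \<open>0 < a\<close>] show ?thesis
    by simp
qed

lemma norm1_traj_diff_le_of_halving:
  assumes pM: "(p, M) \<in> param_slice d H a" "0 \<le> a" "a \<le> 1"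
    and pM': "(p', M') \<in> param_slice d H a'" "0 \<le> a'" "a' \<le> 1"
    and halving: "zero_sum_halving d A n" and "1 \<le> n"
  shows "norm1 d (\<lambda>i. traj p M m i - traj p' M' m i) \<le> 4 * (real n)\<^sup>2 * param_dist p M p' M'"
proof -
  obtain c e where step: "\<And>m. (\<lambda>i. traj p M (Suc m) i - traj p' M' (Suc m) i)
      = (\<lambda>i. c m * mv d A (\<lambda>j. traj p M m j - traj p' M' m j) i + e m i)"
    and c: "\<And>m. 0 \<le> c m" "\<And>m. c m \<le> 1 - a" and e: "\<And>m. norm1 d (e m) \<le> 2 * param_dist p M p' M'"
    using traj_diff_recursion[OF pM pM'] by blast
  have "c m \<le> 1" for m
    using c(2)[of m] pM(2) by linarith
  moreover have "(\<Sum>i<d. traj p M m i - traj p' M' m i) = 0" for m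
    using traj_in_simplex[OF pM, of m] traj_in_simplex[OF pM', of m]
    by (simp add: simplex_def sum_subtractf)
  ultimately have "norm1 d (\<lambda>i. traj p M m i - traj p' M' m i) \<le> 2 * (real n)\<^sup>2 * (2 * param_dist p M p' M')"
    by (intro norm1_mixing_recursion_le[where \<delta> = "\<lambda>m i. traj p M m i - traj p' M' m i",
          OF stoch_A halving \<open>1 \<le> n\<close> _ step c(1) _ e]) simp_all
  then show ?thesis
    by simp
qed

lemma norm1_traj_diff_le:
  assumes pM: "(p, M) \<in> param_slice d H a" "0 \<le> a" "a \<le> 1"
    and pM': "(p', M') \<in> param_slice d H a'" "0 \<le> a'" "a' \<le> 1"
    and "0 < \<tau>"
    and mass_or_halving: "1 / (96 * real \<tau>) \<le> a \<or> (\<exists>n. 1 \<le> n \<and> n \<le> 4 * \<tau> \<and> zero_sum_halving d A n)"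
  shows "norm1 d (\<lambda>i. traj p M m i - traj p' M' m i) \<le> 192 * (real \<tau>)\<^sup>2 * param_dist p M p' M'"
  using mass_or_halving
proof
  assume mass: "1 / (96 * real \<tau>) \<le> a"
  then have "0 < a"
    using \<open>0 < \<tau>\<close> by (auto intro: less_le_trans[OF _ mass])
  have "1 / a \<le> 96 * real \<tau>"
    using mass \<open>0 < a\<close> \<open>0 < \<tau>\<close> by (simp add: field_simps)
  also have "\<dots> \<le> 96 * (real \<tau>)\<^sup>2"
    using \<open>0 < \<tau>\<close> by (simp add: power2_eq_square)
  finally have "2 * param_dist p M p' M' * (1 / a) \<le> 2 * param_dist p M p' M' * (96 * (real \<tau>)\<^sup>2)"
    by (intro mult_left_mono) (simp_all add: normdH_nonneg)
  with norm1_traj_diff_le_of_mass[OF pM pM' \<open>0 < a\<close>, of m] show ?thesis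
    by (simp add: mult_ac)
next
  assume "\<exists>n. 1 \<le> n \<and> n \<le> 4 * \<tau> \<and> zero_sum_halving d A n"
  then obtain n where n: "1 \<le> n" "n \<le> 4 * \<tau>" and halving: "zero_sum_halving d A n"
    by blast
  have "(real n)\<^sup>2 \<le> 16 * (real \<tau>)\<^sup>2"
    using n power_mono[of "real n" "4 * real \<tau>" 2] by (simp add: power_mult_distrib)
  then have "4 * (real n)\<^sup>2 \<le> 192 * (real \<tau>)\<^sup>2"
    using zero_le_power2[of "real \<tau>"] by linarith
  then have "4 * (real n)\<^sup>2 * param_dist p M p' M' \<le> 192 * (real \<tau>)\<^sup>2 * param_dist p M p' M'"
    by (rule mult_right_mono) (rule normdH_nonneg)
  with norm1_traj_diff_le_of_halving[OF pM pM' halving n(1)] show ?thesis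
    by (rule order_trans)
qed

end

lemma loss_lipschitz:
  assumes "0 < \<tau>" "stoch d A" "stoch d B" "0 \<le> alb" "aub \<le> 1" "x1 \<in> simplex d"
    and "\<forall>t\<ge>1. 0 \<le> \<gamma> t \<and> \<gamma> t \<le> 1 \<and> w t \<in> simplex d" and "0 \<le> L"
    and lipschitz: "\<forall>t\<ge>1. \<forall>x\<in>simplex d. \<forall>x'\<in>simplex d. \<forall>u\<in>Iset d alb aub. \<forall>u'\<in>Iset d alb aub.
           \<bar>c t x u - c t x' u'\<bar> \<le> L * (norm1 d (\<lambda>i. x i - x' i) + norm1 d (\<lambda>i. u i - u' i))"
    and "Ksim d A B alb aub \<tau> \<noteq> {}" and "1 \<le> t"
    and "(p, M) \<in> domX d H (a0 d A \<tau> alb aub) aub" "(p', M') \<in> domX d H (a0 d A \<tau> alb aub) aub"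
  shows "\<bar>loss d H A B \<gamma> x1 w c t p M - loss d H A B \<gamma> x1 w c t p' M'\<bar>
    \<le> 193 * L * (real \<tau>)\<^sup>2 * normdH d H (\<lambda>i. p i - p' i) (\<lambda>h i j. M h i j - M' h i j)"
proof -
  interpret simplex_lds d H A B \<gamma> x1 w
    using assms(2,3,6,7) by unfold_locales auto
  let ?N = "param_dist p M p' M'"
  obtain a a' where range: "a \<in> {alb..aub}" "a' \<in> {alb..aub}"
    and a: "a0 d A \<tau> alb aub \<le> a" "(p, M) \<in> param_slice d H a" and a': "(p', M') \<in> param_slice d H a'"
    using param_slice_of_domX[OF assms(12)] param_slice_of_domX[OF assms(13)] by metis
  have mass_or_halving: "1 / (96 * real \<tau>) \<le> a \<or> (\<exists>n. 1 \<le> n \<and> n \<le> 4 * \<tau> \<and> zero_sum_halving d A n)"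
    using zero_sum_halving_of_small_mass[OF dim_pos assms(1-4,10) a(1)] range assms(5) by force
  have "traj p M (t - 1) \<in> simplex d" "traj p' M' (t - 1) \<in> simplex d"
    using a(2) a' range assms(4,5) by (auto intro!: traj_in_simplex)
  moreover have "ctrl p M t \<in> Iset d alb aub" "ctrl p' M' t \<in> Iset d alb aub"
    using a(2) a' range assms(4) unfolding Iset_def by (auto intro!: ctrl_in_simplex_sc)
  ultimately have "\<bar>loss d H A B \<gamma> x1 w c t p M - loss d H A B \<gamma> x1 w c t p' M'\<bar>
      \<le> L * (norm1 d (\<lambda>i. traj p M (t - 1) i - traj p' M' (t - 1) i)
             + norm1 d (\<lambda>i. ctrl p M t i - ctrl p' M' t i))"
    unfolding loss_def using lipschitz \<open>1 \<le> t\<close> by blast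
  also have "\<dots> \<le> L * (192 * (real \<tau>)\<^sup>2 * ?N + (real \<tau>)\<^sup>2 * ?N)"
  proof -
    have "?N \<le> (real \<tau>)\<^sup>2 * ?N"
      using mult_right_mono[of 1 "(real \<tau>)\<^sup>2" ?N] \<open>0 < \<tau>\<close> normdH_nonneg by simp
    then show ?thesis
      using norm1_traj_diff_le[OF a(2) _ _ a' _ _ \<open>0 < \<tau>\<close> mass_or_halving]
        order_trans[OF norm1_ctrl_diff_le] range assms(4,5) \<open>0 \<le> L\<close>
      by (intro mult_left_mono add_mono) auto
  qed
  finally show ?thesis
    by (simp add: algebra_simps)
qed

theorem lemma9:
  "\<exists>C>0. \<forall>(d::nat) (H::nat) (T::nat) A B (alb::real) (aub::real) x1 \<gamma> w c (L::real) (\<tau>::nat).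
     ( 1 \<le> d \<and> 0 < \<tau> \<and> stoch d A \<and> stoch d B
     \<and> 0 \<le> alb \<and> alb \<le> aub \<and> aub \<le> 1 \<and> x1 \<in> simplex d
     \<and> (\<forall>t\<ge>1. 0 \<le> \<gamma> t \<and> \<gamma> t \<le> 1 \<and> w t \<in> simplex d)
     \<and> 0 \<le> L
     \<and> (\<forall>t\<ge>1. \<forall>x\<in>simplex d. \<forall>x'\<in>simplex d. \<forall>u\<in>Iset d alb aub. \<forall>u'\<in>Iset d alb aub.
           \<forall>\<theta>::real. 0 \<le> \<theta> \<and> \<theta> \<le> 1 \<longrightarrow>
             c t (\<lambda>i. \<theta> * x i + (1 - \<theta>) * x' i) (\<lambda>i. \<theta> * u i + (1 - \<theta>) * u' i)
               \<le> \<theta> * c t x u + (1 - \<theta>) * c t x' u')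
     \<and> (\<forall>t\<ge>1. \<forall>x\<in>simplex d. \<forall>x'\<in>simplex d. \<forall>u\<in>Iset d alb aub. \<forall>u'\<in>Iset d alb aub.
           \<bar>c t x u - c t x' u'\<bar> \<le> L * (norm1 d (\<lambda>i. x i - x' i) + norm1 d (\<lambda>i. u i - u' i)))
     \<and> Ksim d A B alb aub \<tau> \<noteq> {} )
   \<longrightarrow> (\<forall>t\<in>{1..T}. \<forall>p M p' M'.
          (p, M) \<in> domX d H (a0 d A \<tau> alb aub) aub \<longrightarrow> (p', M') \<in> domX d H (a0 d A \<tau> alb aub) aub \<longrightarrow>
          \<bar>loss d H A B \<gamma> x1 w c t p M - loss d H A B \<gamma> x1 w c t p' M'\<bar>
            \<le> C * L * (real \<tau>)\<^sup>2 * normdH d H (\<lambda>i. p i - p' i) (\<lambda>h i j. M h i j - M' h i j))"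
  by (intro exI[of _ "193::real"] conjI allI impI ballI) (simp, elim conjE, rule loss_lipschitz, auto)

end
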